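(* For every integer $n\ge 1$ and $x\in\mathbb{R}$, $$E_{-n}^k(x)=E_n^k(-x)+\frac{k}{n+k}\,E_n^k(x).$$
   Context: Fix $k\ge 0$. Partial order on $\mathbb{Z}$: $j\triangleleft n$ iff either ($|j|<|n|$ and $|n|-|j|$ is a positive even integer) or ($|j|=|n|$ and $n<j$). Let $\delta_k(x)=|2\sin x|^{2k}$ and $(f,g)_k=\frac{1}{2\pi}\int_0^{2\pi} f(x)\overline{g(x)}\delta_k(x)\,dx$. The non-symmetric Heckman–Opdam polynomials $E_n^k$, $n\in\mathbb{Z}$, are the functions on $\mathbb{R}$ of the form $E_n^k(x)=e^{nx}+\sum_{j\triangleleft n}c_{n,j}e^{jx}$ (finite sum) such that $(E_n^k(i\,\cdot),e^{ij\,\cdot})_k=0$ for all $j\triangleleft n$. It is known that $T^kE_n^k=\tilde n E_n^k$ for the Cherednik operator $T^k f(x)=f'(x)+2k\frac{f(x)-f(-x)}{1-e^{-2x}}-kf(x)$, where $\tilde n=n+k$ if $n\ge0$ and $\tilde n=n-k$ if $n<0$. *)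

theory Defs
  imports "HOL-Analysis.Analysis"
begin

definition tri :: "int \<Rightarrow> int \<Rightarrow> bool" where
  "tri j n \<longleftrightarrow> (\<bar>j\<bar> < \<bar>n\<bar> \<and> even (\<bar>n\<bar> - \<bar>j\<bar>)) \<or> (\<bar>j\<bar> = \<bar>n\<bar> \<and> n < j)"

definition delta :: "real \<Rightarrow> real \<Rightarrow> real" where
  "delta k x = \<bar>2 * sin x\<bar> powr (2 * k)"

definition ip :: "real \<Rightarrow> (real \<Rightarrow> complex) \<Rightarrow> (real \<Rightarrow> complex) \<Rightarrow> complex" where
  "ip k f g = integral {0..2*pi} (\<lambda>x. f x * cnj (g x) * complex_of_real (delta k x)) / complex_of_real (2*pi)"

text \<open>Exponential polynomial e^{nz} + sum over j \<triangleleft> n of c_j e^{jz}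
  (the set of such j is finite, contained in [-|n|,|n|]).\<close>
definition expoly :: "(int \<Rightarrow> complex) \<Rightarrow> int \<Rightarrow> complex \<Rightarrow> complex" where
  "expoly c n z = exp (of_int n * z) +
     (\<Sum>j\<in>{j\<in>{-\<bar>n\<bar>..\<bar>n\<bar>}. tri j n}. c j * exp (of_int j * z))"

definition HO_coeffs :: "real \<Rightarrow> int \<Rightarrow> (int \<Rightarrow> complex) \<Rightarrow> bool" where
  "HO_coeffs k n c \<longleftrightarrow> (\<forall>j. \<not> tri j n \<longrightarrow> c j = 0) \<and>
     (\<forall>j. tri j n \<longrightarrow> ip k (\<lambda>t. expoly c n (\<i> * of_real t)) (\<lambda>t. exp (\<i> * of_int j * of_real t)) = 0)"

definition E :: "real \<Rightarrow> int \<Rightarrow> real \<Rightarrow> complex" where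
  "E k n x = expoly (THE c. HO_coeffs k n c) n (complex_of_real x)"

end

(* The coefficient vector of E_m^k (leading coefficient 1 at m, all other coefficients at
   indices j with tri j m) is cut out by orthogonality to the exponentials e^{jx}, tri j m, for
   the Gram matrix of the moments of the weight. This matrix is nondegenerate, so E_m^k exists
   and is unique. Integration by parts gives a two-term recurrence for the moments, which makes
   the matrix of the Cherednik operator T^k on exponentials symmetric for the Gram form.
   For n >= 1 let F(x) = E_n^k(-x) + k/(n+k) E_n^k(x). Since the weight is even, F is orthogonal
   to every e^{jx} with tri j n. Modulo these exponentials, E_n^k and F are eigenvectors of T^k
   with eigenvalues n+k and -(n+k), so F is also orthogonal to e^{nx}. As F has leading term
   e^{-nx} and the indices below -n are n together with those below n, F = E_{-n}^k. *)

theory Submission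
  imports Defs
begin

section \<open>Characters and the weight\<close>

definition echar :: "int \<Rightarrow> real \<Rightarrow> complex" where
  "echar p t = exp (\<i> * of_int p * of_real t)"

lemma echar_mult: "echar j t * echar m t = echar (j + m) t"
  by (simp add: echar_def exp_add[symmetric] algebra_simps)

lemma cnj_echar: "cnj (echar p t) = echar (- p) t"
  by (simp add: echar_def exp_cnj)

lemma continuous_on_echar [continuous_intros]: "continuous_on S (echar p)"
  unfolding echar_def by (intro continuous_intros)

lemma echar_0 [simp]: "echar p 0 = 1"
  by (simp add: echar_def)

lemma echar_2pi [simp]: "echar p (2 * pi) = 1"
proof -
  have "echar p (2 * pi) = exp ((2 * of_int p * pi) * \<i>)"
    by (simp add: echar_def algebra_simps)
  also have "\<dots> = 1"
    by (rule exp_integer_2pi) simp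
  finally show ?thesis .
qed

lemma echar_reflect: "echar p (2 * pi - t) = echar (- p) t"
proof -
  have "echar p (2 * pi - t) = echar p (2 * pi) * echar (- p) t"
    unfolding echar_def exp_add[symmetric] by (rule arg_cong[where f = exp]) (simp add: algebra_simps)
  then show ?thesis
    by simp
qed

lemma echar_has_vector_derivative:
  "(echar p has_vector_derivative (\<i> * of_int p * echar p t)) (at t within S)"
proof -
  have "((\<lambda>z. exp (\<i> * of_int p * z)) has_field_derivative \<i> * of_int p * exp (\<i> * of_int p * of_real t))
      (at (of_real t))"
    by (auto intro!: derivative_eq_intros)
  from has_vector_derivative_real_field[OF this] show ?thesis
    unfolding echar_def[abs_def] by simp
qed

lemma echar_has_integral:
  "(echar p has_integral (if p = 0 then of_real (2 * pi) else 0)) {0..2 * pi}"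
proof (cases "p = 0")
  case True
  then have "echar p = (\<lambda>_. 1)"
    by (simp add: echar_def fun_eq_iff)
  with True show ?thesis
    using has_integral_const_real[of "1::complex" 0 "2 * pi"] by (simp add: scaleR_conv_of_real)
next
  case False
  have "((\<lambda>t. \<i> * of_int p * echar p t / (\<i> * of_int p)) has_integral
      echar p (2 * pi) / (\<i> * of_int p) - echar p 0 / (\<i> * of_int p)) {0..2 * pi}"
    by (intro fundamental_theorem_of_calculus has_vector_derivative_divide echar_has_vector_derivative) simp
  with False show ?thesis
    by simp
qed

lemma cos_eq_echar: "complex_of_real (cos t) = (echar 1 t + echar (- 1) t) / 2"
  by (simp add: cos_of_real[symmetric] cos_exp_eq echar_def)

lemma sin_eq_echar: "complex_of_real (sin t) = (echar 1 t - echar (- 1) t) / (2 * \<i>)"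
  by (simp add: sin_of_real[symmetric] sin_exp_eq echar_def)

lemma sin_nonzero_0_2pi:
  assumes "t \<in> {0..2 * pi} - {0, pi, 2 * pi}"
  shows "sin t \<noteq> 0"
proof
  assume "sin t = 0"
  then obtain m :: int where m: "t = of_int m * pi"
    by (auto simp: sin_zero_iff_int2)
  with assms have "0 \<le> m" "m \<le> 2" "m \<notin> {0, 1, 2}"
    using pi_gt_zero by (auto simp: zero_le_mult_iff)
  then show False
    by auto
qed

text \<open>Since \<open>0 powr 0 = 0\<close>, \<^term>\<open>delta 0\<close> vanishes at the zeros of \<open>sin\<close> instead of being
  constantly \<open>1\<close>; \<open>delta_reg\<close> is the continuous representative of the weight.\<close>

definition delta_reg :: "real \<Rightarrow> real \<Rightarrow> real" where
  "delta_reg k t = (if k = 0 then 1 else delta k t)"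

lemma delta_eq_delta_reg: "sin t \<noteq> 0 \<Longrightarrow> delta k t = delta_reg k t"
  by (simp add: delta_reg_def delta_def)

lemma delta_reg_pos: "sin t \<noteq> 0 \<Longrightarrow> 0 < delta_reg k t"
  by (simp add: delta_reg_def delta_def)

lemma delta_reg_nonneg: "0 \<le> delta_reg k t"
  by (simp add: delta_reg_def delta_def)

lemma continuous_on_delta: "0 < k \<Longrightarrow> continuous_on S (delta k)"
  unfolding delta_def by (intro continuous_on_powr' continuous_intros) auto

lemma continuous_on_delta_reg:
  assumes "0 \<le> k"
  shows "continuous_on S (delta_reg k)"
  using assms by (cases "k = 0") (simp_all add: delta_reg_def[abs_def] continuous_on_delta)

lemma continuous_on_sin_delta:
  assumes "0 \<le> k"
  shows "continuous_on S (\<lambda>t. sin t * delta k t)"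
proof (cases "k = 0")
  case True
  then have sin_delta: "(\<lambda>t. sin t * delta k t) = (\<lambda>t. sin t)"
    by (auto simp: delta_def)
  show ?thesis
    unfolding sin_delta by (intro continuous_intros)
next
  case False
  with assms show ?thesis
    by (intro continuous_intros continuous_on_delta) simp
qed

lemma delta_reflect: "delta k (2 * pi - t) = delta k t"
  by (simp add: delta_def sin_diff)

lemma delta_eq_powr: "delta k t = (4 * (sin t)\<^sup>2) powr k"
proof -
  have "\<bar>2 * sin t\<bar> powr 2 = 4 * (sin t)\<^sup>2"
    by (simp add: power2_eq_square)
  then show ?thesis
    unfolding delta_def by (metis powr_powr)
qed

lemma sin_delta_has_real_derivative:
  assumes "sin t \<noteq> 0"
  shows "((\<lambda>t. sin t * delta k t) has_real_derivative (2 * k + 1) * cos t * delta k t) (at t)"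
proof -
  have "((\<lambda>t. sin t * (4 * (sin t)\<^sup>2) powr k) has_real_derivative
      cos t * (4 * (sin t)\<^sup>2) powr k
      + (4 * (sin t)\<^sup>2) powr k * (0 * ln (4 * (sin t)\<^sup>2) + 8 * sin t * cos t * k / (4 * (sin t)\<^sup>2)) * sin t) (at t)"
    using assms by (intro DERIV_mult DERIV_sin DERIV_powr) (auto intro!: derivative_eq_intros)
  moreover have "cos t * (4 * (sin t)\<^sup>2) powr k
      + (4 * (sin t)\<^sup>2) powr k * (0 * ln (4 * (sin t)\<^sup>2) + 8 * sin t * cos t * k / (4 * (sin t)\<^sup>2)) * sin t
      = (2 * k + 1) * cos t * (4 * (sin t)\<^sup>2) powr k"
    using assms by (simp add: field_simps power2_eq_square)
  ultimately show ?thesis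
    unfolding delta_eq_powr by simp
qed

section \<open>Moments\<close>

definition moment :: "real \<Rightarrow> int \<Rightarrow> complex" where
  "moment k p = integral {0..2 * pi} (\<lambda>t. echar p t * of_real (delta k t))"

lemma echar_delta_integrable:
  assumes "0 \<le> k"
  shows "(\<lambda>t. echar p t * of_real (delta k t)) integrable_on {0..2 * pi}"
proof (rule integrable_spike_finite[of "{0, pi, 2 * pi}"])
  show "(\<lambda>t. echar p t * of_real (delta_reg k t)) integrable_on {0..2 * pi}"
    using assms by (intro integrable_continuous_interval continuous_intros continuous_on_delta_reg)
qed (use sin_nonzero_0_2pi delta_eq_delta_reg in auto)

lemma integral_0_2pi_reflect:
  "integral {0..2 * pi} (\<lambda>t. g (2 * pi - t)) = integral {0..2 * pi} g"
proof -
  have "integral {0..2 * pi} (\<lambda>t. g (2 * pi - t)) = integral {0..2 * pi} ((\<lambda>t. g (- t)) \<circ> (+) (- 2 * pi))"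
    by (simp add: o_def)
  also have "\<dots> = integral {- (2 * pi)..- 0} (\<lambda>t. g (- t))"
    by (subst integral_shift_Icc_real) simp
  also have "\<dots> = integral {0..2 * pi} g"
    by (rule Henstock_Kurzweil_Integration.integral_reflect_real)
  finally show ?thesis .
qed

lemma moment_uminus [simp]: "moment k (- p) = moment k p"
proof -
  have "moment k p = integral {0..2 * pi} (\<lambda>t. echar p (2 * pi - t) * of_real (delta k (2 * pi - t)))"
    unfolding moment_def by (rule integral_0_2pi_reflect[symmetric])
  then show ?thesis
    by (simp add: moment_def echar_reflect delta_reflect)
qed

lemma moment_commute: "moment k (a - b) = moment k (b - a)"
  by (metis minus_diff_eq moment_uminus)

lemma echar_delta_has_integral:
  assumes "0 \<le> k"
  shows "((\<lambda>t. echar p t * of_real (delta k t)) has_integral moment k p) {0..2 * pi}"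
  unfolding moment_def using assms by (intro integrable_integral echar_delta_integrable)

lemma sin_delta_echar_has_vector_derivative:
  assumes "sin t \<noteq> 0"
  shows "((\<lambda>t. complex_of_real (sin t * delta k t) * echar (r + 1) t) has_vector_derivative
    of_real (delta k t) / 2 * ((2 * of_real k + of_int r + 2) * echar (r + 2) t + (2 * of_real k - of_int r) * echar r t))
    (at t)"
proof -
  have deriv: "((\<lambda>t. complex_of_real (sin t * delta k t) * echar (r + 1) t) has_vector_derivative
      of_real (sin t * delta k t) * (\<i> * of_int (r + 1) * echar (r + 1) t)
      + of_real ((2 * k + 1) * cos t * delta k t) * echar (r + 1) t) (at t)"
    using assms by (intro derivative_intros sin_delta_has_real_derivative echar_has_vector_derivative)
  have derivative_eq: "of_real (sin t * delta k t) * (\<i> * of_int (r + 1) * echar (r + 1) t)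
      + of_real ((2 * k + 1) * cos t * delta k t) * echar (r + 1) t
      = of_real (delta k t) / 2 * ((2 * of_real k + of_int r + 2) * echar (r + 2) t + (2 * of_real k - of_int r) * echar r t)"
  proof -
    have "echar (r + 2) t = echar 1 t * echar (r + 1) t" "echar r t = echar (- 1) t * echar (r + 1) t"
      by (simp_all add: echar_mult add.commute)
    then show ?thesis
      unfolding of_real_mult sin_eq_echar cos_eq_echar by (simp add: field_simps)
  qed
  show ?thesis
    using deriv unfolding derivative_eq .
qed

text \<open>Integrate the derivative of \<open>sin t * delta k t * echar (r + 1) t\<close>, which vanishes at
  \<open>0\<close> and \<open>2 * pi\<close>.\<close>

lemma moment_recurrence:
  assumes "0 \<le> k"
  shows "(2 * of_real k + of_int r + 2) * moment k (r + 2) + (2 * of_real k - of_int r) * moment k r = 0"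
proof -
  define F where "F t = complex_of_real (sin t * delta k t) * echar (r + 1) t" for t
  define F' where "F' t = of_real (delta k t) / 2 *
    ((2 * of_real k + of_int r + 2) * echar (r + 2) t + (2 * of_real k - of_int r) * echar r t)" for t
  have "(F' has_integral F (2 * pi) - F 0) {0..2 * pi}"
  proof (rule fundamental_theorem_of_calculus_interior_strong[of "{pi}"])
    show "continuous_on {0..2 * pi} F"
      unfolding F_def using assms by (intro continuous_intros continuous_on_sin_delta)
    show "(F has_vector_derivative F' t) (at t)" if "t \<in> {0<..<2 * pi} - {pi}" for t
      unfolding F_def[abs_def] F'_def using that sin_nonzero_0_2pi[of t]
      by (intro sin_delta_echar_has_vector_derivative) auto
  qed auto
  then have "(F' has_integral 0) {0..2 * pi}"
    by (simp add: F_def)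
  moreover have "(F' has_integral 1 / 2 * ((2 * of_real k + of_int r + 2) * moment k (r + 2)
      + (2 * of_real k - of_int r) * moment k r)) {0..2 * pi}"
  proof -
    have F'_eq: "F' = (\<lambda>t. 1 / 2 * ((2 * of_real k + of_int r + 2) * (echar (r + 2) t * of_real (delta k t))
        + (2 * of_real k - of_int r) * (echar r t * of_real (delta k t))))"
      by (simp add: fun_eq_iff F'_def algebra_simps)
    show ?thesis
      unfolding F'_eq using echar_delta_has_integral[OF assms]
      by (intro has_integral_mult_right has_integral_add)
  qed
  ultimately have "0 = 1 / 2 * ((2 * of_real k + of_int r + 2) * moment k (r + 2)
      + (2 * of_real k - of_int r) * moment k r)"
    by (rule has_integral_unique)
  then show ?thesis
    by simp
qed

lemma moment_recurrence_difference:
  assumes "0 \<le> k"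
  shows "(of_real k - of_int (r + 2) / 2) * moment k (r + 2) - (of_real k - of_int r / 2) * moment k r
    = 2 * of_real k * moment k (r + 2)"
proof -
  have "(of_real k - of_int (r + 2) / 2) * moment k (r + 2) - (of_real k - of_int r / 2) * moment k r
      = 2 * of_real k * moment k (r + 2)
        - ((2 * of_real k + of_int r + 2) * moment k (r + 2) + (2 * of_real k - of_int r) * moment k r) / 2"
    by (simp add: field_simps)
  with moment_recurrence[OF assms] show ?thesis
    by simp
qed

lemma echar_sum_delta_has_integral:
  assumes "0 \<le> k" and "finite J"
  shows "((\<lambda>t. (\<Sum>j\<in>J. a j * echar j t) * cnj (echar l t) * of_real (delta k t)) has_integral
      (\<Sum>j\<in>J. a j * moment k (j - l))) {0..2 * pi}"
proof -
  have "(\<lambda>t. (\<Sum>j\<in>J. a j * echar j t) * cnj (echar l t) * of_real (delta k t))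
      = (\<lambda>t. \<Sum>j\<in>J. a j * (echar (j - l) t * of_real (delta k t)))"
    by (simp add: fun_eq_iff sum_distrib_right cnj_echar echar_mult mult.assoc)
  then show ?thesis
    using assms by (auto intro!: has_integral_sum has_integral_mult_right echar_delta_has_integral)
qed

lemma ip_echar_sum:
  assumes "0 \<le> k" and "finite J"
  shows "ip k (\<lambda>t. \<Sum>j\<in>J. a j * echar j t) (echar l) = (\<Sum>j\<in>J. a j * moment k (j - l)) / of_real (2 * pi)"
  unfolding ip_def using integral_unique[OF echar_sum_delta_has_integral[OF assms]] by simp

lemma echar_sum_fourier_coefficient:
  assumes "finite J" and "j \<in> J"
  shows "((\<lambda>t. (\<Sum>m\<in>J. a m * echar m t) * echar (- j) t) has_integral a j * of_real (2 * pi)) {0..2 * pi}"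
proof -
  have "(\<lambda>t. (\<Sum>m\<in>J. a m * echar m t) * echar (- j) t) = (\<lambda>t. \<Sum>m\<in>J. a m * echar (m - j) t)"
    by (simp add: fun_eq_iff sum_distrib_right mult.assoc echar_mult)
  moreover have "((\<lambda>t. \<Sum>m\<in>J. a m * echar (m - j) t) has_integral
      (\<Sum>m\<in>J. a m * (if m - j = 0 then of_real (2 * pi) else 0))) {0..2 * pi}"
    using assms(1) by (intro has_integral_sum has_integral_mult_right echar_has_integral)
  moreover have "(\<Sum>m\<in>J. a m * (if m - j = 0 then of_real (2 * pi) else 0)) = a j * of_real (2 * pi)"
    using assms by (simp add: if_distrib[of "(*) _"] cong: if_cong)
  ultimately show ?thesis
    by (simp only:)
qed

lemma moment_quadratic_form_has_integral:
  assumes "0 \<le> k" and "finite J"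
  shows "((\<lambda>t. of_real ((cmod (\<Sum>j\<in>J. a j * echar j t))\<^sup>2 * delta k t)) has_integral
      (\<Sum>l\<in>J. cnj (a l) * (\<Sum>j\<in>J. a j * moment k (j - l)))) {0..2 * pi}"
proof -
  define f where "f t = (\<Sum>j\<in>J. a j * echar j t)" for t
  have "of_real ((cmod (f t))\<^sup>2 * delta k t) = (\<Sum>l\<in>J. cnj (a l) * (f t * cnj (echar l t) * of_real (delta k t)))"
    for t
  proof -
    have "cnj (f t) = (\<Sum>l\<in>J. cnj (a l) * cnj (echar l t))"
      by (simp add: f_def)
    then have "f t * cnj (f t) * of_real (delta k t) = (\<Sum>l\<in>J. cnj (a l) * (f t * cnj (echar l t) * of_real (delta k t)))"
      by (simp add: sum_distrib_left sum_distrib_right algebra_simps)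
    then show ?thesis
      by (simp only: of_real_mult complex_norm_square)
  qed
  then show ?thesis
    using assms unfolding f_def[symmetric]
    by (auto intro!: has_integral_sum has_integral_mult_right echar_sum_delta_has_integral simp: f_def)
qed

lemma echar_sum_eq_0_if_moment_form_eq_0:
  assumes "0 \<le> k" and "finite J" and form: "(\<Sum>l\<in>J. cnj (a l) * (\<Sum>j\<in>J. a j * moment k (j - l))) = 0"
    and t: "t \<in> {0..2 * pi} - {0, pi, 2 * pi}"
  shows "(\<Sum>j\<in>J. a j * echar j t) = 0"
proof -
  define f where "f t = (\<Sum>j\<in>J. a j * echar j t)" for t
  define h where "h t = (cmod (f t))\<^sup>2 * delta_reg k t" for t
  have continuous_h: "continuous_on {0..2 * pi} h"
    unfolding h_def f_def using assms(1) by (intro continuous_intros continuous_on_delta_reg)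
  then obtain I where I: "(h has_integral I) {0..2 * pi}"
    using integrable_continuous_interval by blast
  have "((\<lambda>t. of_real ((cmod (f t))\<^sup>2 * delta k t)) has_integral complex_of_real I) {0..2 * pi}"
  proof (rule has_integral_spike_finite[of "{0, pi, 2 * pi}"])
    show "((\<lambda>t. complex_of_real (h t)) has_integral complex_of_real I) {0..2 * pi}"
      using I by (rule has_integral_of_real)
  qed (use sin_nonzero_0_2pi delta_eq_delta_reg in \<open>auto simp: h_def\<close>)
  moreover have "((\<lambda>t. of_real ((cmod (f t))\<^sup>2 * delta k t)) has_integral (0 :: complex)) {0..2 * pi}"
    using moment_quadratic_form_has_integral[OF assms(1,2), of a] form by (simp add: f_def)
  ultimately have "complex_of_real I = 0"
    by (rule has_integral_unique)
  then have "h t = 0"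
    using has_integral_0_cbox_imp_0[of 0 "2 * pi" h t] continuous_h I t pi_gt_zero
    by (auto simp: h_def delta_reg_nonneg)
  moreover have "0 < delta_reg k t"
    using sin_nonzero_0_2pi[OF t] by (rule delta_reg_pos)
  ultimately show ?thesis
    by (simp add: h_def f_def)
qed

lemma moment_matrix_nondegenerate:
  assumes "0 \<le> k" and "finite J" and orth: "\<forall>l\<in>J. (\<Sum>j\<in>J. a j * moment k (j - l)) = 0"
    and "j \<in> J"
  shows "a j = 0"
proof -
  have "((\<lambda>t. (\<Sum>m\<in>J. a m * echar m t) * echar (- j) t) has_integral 0) {0..2 * pi}"
  proof (rule has_integral_spike_finite[of "{0, pi, 2 * pi}" _ _ "\<lambda>_. 0", OF _ _ has_integral_0])
    show "(\<Sum>m\<in>J. a m * echar m t) * echar (- j) t = 0" if "t \<in> {0..2 * pi} - {0, pi, 2 * pi}" for t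
      using echar_sum_eq_0_if_moment_form_eq_0[OF assms(1,2) _ that] orth by simp
  qed simp
  with echar_sum_fourier_coefficient[OF assms(2,4), of a] have "a j * of_real (2 * pi) = 0"
    by (rule has_integral_unique)
  then show ?thesis
    by simp
qed

section \<open>Existence and uniqueness of the coefficient vectors\<close>

text \<open>Bordering: a solution on \<open>F\<close> extends to \<open>insert a F\<close> because the Schur complement \<open>D\<close>
  of the bordered system is nonzero.\<close>

lemma square_system_solvable:
  fixes G :: "'a \<Rightarrow> 'a \<Rightarrow> 'b::field"
  assumes "finite S"
    and "\<And>T c. T \<subseteq> S \<Longrightarrow> \<forall>l\<in>T. (\<Sum>j\<in>T. c j * G j l) = 0 \<Longrightarrow> \<forall>j\<in>T. c j = 0"
  shows "\<exists>c. \<forall>l\<in>S. (\<Sum>j\<in>S. c j * G j l) = b l"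
  using assms
proof (induction S arbitrary: b rule: finite_induct)
  case empty
  then show ?case
    by simp
next
  case (insert a F)
  have "\<exists>c. \<forall>l\<in>F. (\<Sum>j\<in>F. c j * G j l) = b' l" for b'
    using insert.prems by (intro insert.IH) blast
  then obtain y x where y: "\<forall>l\<in>F. (\<Sum>j\<in>F. y j * G j l) = G a l"
    and x: "\<forall>l\<in>F. (\<Sum>j\<in>F. x j * G j l) = b l"
    by metis
  define D where "D = G a a - (\<Sum>j\<in>F. y j * G j a)"
  have sum_insert: "(\<Sum>j\<in>insert a F. (if j = a then s else u j - s * y j) * G j l)
      = s * (G a l - (\<Sum>j\<in>F. y j * G j l)) + (\<Sum>j\<in>F. u j * G j l)" for s u l
  proof -
    have "(\<Sum>j\<in>F. (if j = a then s else u j - s * y j) * G j l) = (\<Sum>j\<in>F. u j * G j l - s * (y j * G j l))"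
      using insert.hyps by (intro sum.cong) (auto simp: algebra_simps)
    with insert.hyps show ?thesis
      by (simp add: sum_subtractf sum_distrib_left algebra_simps)
  qed
  have "D \<noteq> 0"
  proof
    assume "D = 0"
    then have "\<forall>l\<in>insert a F. (\<Sum>j\<in>insert a F. (if j = a then 1 else 0 - 1 * y j) * G j l) = 0"
      using y by (simp add: sum_insert D_def)
    then show False
      using insert.prems[of "insert a F"] by fastforce
  qed
  define s where "s = (b a - (\<Sum>j\<in>F. x j * G j a)) / D"
  have "\<forall>l\<in>insert a F. (\<Sum>j\<in>insert a F. (if j = a then s else x j - s * y j) * G j l) = b l"
    using x y \<open>D \<noteq> 0\<close> by (simp add: sum_insert s_def D_def[symmetric])
  then show ?case
    by (rule exI[where x = "\<lambda>j. if j = a then s else x j - s * y j"])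
qed

definition below :: "int \<Rightarrow> int set" where
  "below m = {j. tri j m}"

lemma below_subset: "below m \<subseteq> {- \<bar>m\<bar>..\<bar>m\<bar>}"
  by (auto simp: below_def tri_def)

lemma finite_below: "finite (below m)"
  using below_subset finite_subset by blast

lemma not_in_below_self [simp]: "m \<notin> below m"
  by (simp add: below_def tri_def)

lemma uminus_in_below: "0 < n \<Longrightarrow> j \<in> below n \<Longrightarrow> - j \<in> below n"
  by (auto simp: below_def tri_def)

lemma uminus_not_in_below: "0 < n \<Longrightarrow> - n \<notin> below n"
  by (simp add: below_def tri_def)

lemma below_uminus: "0 < n \<Longrightarrow> below (- n) = insert n (below n)"
  by (auto simp: below_def tri_def)

text \<open>\<open>gram k N u l\<close> is \<open>2 * pi\<close> times the inner product of \<open>\<Sum>j. u j * echar j\<close> with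
  \<open>echar l\<close>, and \<open>HO_vector k m\<close> describes the coefficient vector of \<open>E_m^k\<close> including its
  leading coefficient.\<close>

definition gram :: "real \<Rightarrow> int \<Rightarrow> (int \<Rightarrow> complex) \<Rightarrow> int \<Rightarrow> complex" where
  "gram k N u l = (\<Sum>j\<in>{- N..N}. u j * moment k (j - l))"

definition HO_vector :: "real \<Rightarrow> int \<Rightarrow> (int \<Rightarrow> complex) \<Rightarrow> bool" where
  "HO_vector k m C \<longleftrightarrow> C m = 1 \<and> (\<forall>j. j \<notin> insert m (below m) \<longrightarrow> C j = 0) \<and>
     (\<forall>l\<in>below m. gram k \<bar>m\<bar> C l = 0)"

lemma gram_eq_sum_support:
  assumes "S \<subseteq> {- N..N}" and "\<And>j. j \<notin> S \<Longrightarrow> u j = 0"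
  shows "gram k N u l = (\<Sum>j\<in>S. u j * moment k (j - l))"
  unfolding gram_def using assms by (intro sum.mono_neutral_right) auto

lemma expoly_eq_sum:
  assumes "\<And>j. j \<notin> below m \<Longrightarrow> c j = 0"
  shows "expoly c m z = (\<Sum>j\<in>{- \<bar>m\<bar>..\<bar>m\<bar>}. (c(m := 1)) j * exp (of_int j * z))"
proof -
  have "{j \<in> {- \<bar>m\<bar>..\<bar>m\<bar>}. tri j m} = below m"
    by (auto simp: below_def tri_def)
  moreover have "(\<Sum>j\<in>{- \<bar>m\<bar>..\<bar>m\<bar>}. (c(m := 1)) j * exp (of_int j * z))
      = exp (of_int m * z) + (\<Sum>j\<in>{- \<bar>m\<bar>..\<bar>m\<bar>} - {m}. (c(m := 1)) j * exp (of_int j * z))"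
    by (subst sum.remove[of _ m]) auto
  moreover have "(\<Sum>j\<in>{- \<bar>m\<bar>..\<bar>m\<bar>} - {m}. (c(m := 1)) j * exp (of_int j * z))
      = (\<Sum>j\<in>below m. c j * exp (of_int j * z))"
    using assms below_subset by (intro sum.mono_neutral_cong_right) auto
  ultimately show ?thesis
    by (simp add: expoly_def)
qed

lemma HO_coeffs_iff_HO_vector:
  assumes "0 \<le> k"
  shows "HO_coeffs k m c \<longleftrightarrow> c m = 0 \<and> HO_vector k m (c(m := 1))"
proof -
  have "ip k (\<lambda>t. expoly c m (\<i> * of_real t)) (\<lambda>t. exp (\<i> * of_int l * of_real t))
      = gram k \<bar>m\<bar> (c(m := 1)) l / of_real (2 * pi)"
    if "\<forall>j. j \<notin> below m \<longrightarrow> c j = 0" for l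
  proof -
    have "(\<lambda>t. expoly c m (\<i> * of_real t)) = (\<lambda>t. \<Sum>j\<in>{- \<bar>m\<bar>..\<bar>m\<bar>}. (c(m := 1)) j * echar j t)"
      using that by (simp add: fun_eq_iff expoly_eq_sum echar_def algebra_simps)
    moreover have "(\<lambda>t. exp (\<i> * of_int l * of_real t)) = echar l"
      by (simp add: fun_eq_iff echar_def)
    ultimately show ?thesis
      using assms by (simp add: ip_echar_sum gram_def)
  qed
  moreover have "tri j m \<longleftrightarrow> j \<in> below m" for j
    by (simp add: below_def)
  moreover have "(\<forall>j. j \<notin> below m \<longrightarrow> c j = 0) \<longleftrightarrow>
      c m = 0 \<and> (\<forall>j. j \<notin> insert m (below m) \<longrightarrow> (c(m := 1)) j = 0)"
    by auto
  ultimately show ?thesis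
    unfolding HO_coeffs_def HO_vector_def by auto
qed

lemma HO_vector_unique:
  assumes "0 \<le> k" and "HO_vector k m C" and "HO_vector k m C'"
  shows "C = C'"
proof -
  have support: "j \<notin> below m \<Longrightarrow> C j - C' j = 0" for j
    using assms(2,3) by (cases "j = m") (auto simp: HO_vector_def)
  have "(\<Sum>j\<in>below m. (C j - C' j) * moment k (j - l)) = (gram k \<bar>m\<bar> C l) - gram k \<bar>m\<bar> C' l" for l
  proof -
    have "(\<Sum>j\<in>below m. (C j - C' j) * moment k (j - l)) = gram k \<bar>m\<bar> (\<lambda>j. C j - C' j) l"
      using below_subset support by (rule gram_eq_sum_support[symmetric])
    also have "\<dots> = (gram k \<bar>m\<bar> C l) - gram k \<bar>m\<bar> C' l"
      by (simp add: gram_def sum_subtractf algebra_simps)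
    finally show ?thesis .
  qed
  then have "\<forall>l\<in>below m. (\<Sum>j\<in>below m. (C j - C' j) * moment k (j - l)) = 0"
    using assms(2,3) by (simp add: HO_vector_def)
  then have "C j - C' j = 0" if "j \<in> below m" for j
    using moment_matrix_nondegenerate[OF assms(1) finite_below, where a = "\<lambda>j. C j - C' j"] that by blast
  with support show ?thesis
    by (metis eq_iff_diff_eq_0 ext)
qed

lemma HO_vector_exists:
  assumes "0 \<le> k"
  shows "\<exists>C. HO_vector k m C"
proof -
  obtain c where c: "\<forall>l\<in>below m. (\<Sum>j\<in>below m. c j * moment k (j - l)) = - moment k (m - l)"
    using square_system_solvable[OF finite_below, where G = "\<lambda>j l. moment k (j - l)" and b = "\<lambda>l. - moment k (m - l)"]
      moment_matrix_nondegenerate[OF assms finite_subset[OF _ finite_below]] by metis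
  define C where "C j = (if j = m then 1 else if j \<in> below m then c j else 0)" for j
  have "gram k \<bar>m\<bar> C l = moment k (m - l) + (\<Sum>j\<in>below m. c j * moment k (j - l))" for l
  proof -
    have "gram k \<bar>m\<bar> C l = (\<Sum>j\<in>insert m (below m). C j * moment k (j - l))"
      using below_subset by (intro gram_eq_sum_support) (auto simp: C_def)
    also have "\<dots> = moment k (m - l) + (\<Sum>j\<in>below m. C j * moment k (j - l))"
      using finite_below by (simp add: C_def)
    also have "(\<Sum>j\<in>below m. C j * moment k (j - l)) = (\<Sum>j\<in>below m. c j * moment k (j - l))"
      by (intro sum.cong) (auto simp: C_def)
    finally show ?thesis .
  qed
  with c have "HO_vector k m C"
    by (simp add: HO_vector_def C_def)
  then show ?thesis
    by blast
qed

lemma E_eq_HO_vector_sum: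
  assumes "0 \<le> k" and "HO_vector k m C"
  shows "E k m x = (\<Sum>j\<in>{- \<bar>m\<bar>..\<bar>m\<bar>}. C j * exp (of_int j * of_real x))"
proof -
  have C_m: "(C(m := 0))(m := 1) = C"
    using assms(2) by (simp add: HO_vector_def fun_eq_iff)
  then have "HO_coeffs k m (C(m := 0))"
    using assms by (simp add: HO_coeffs_iff_HO_vector)
  moreover have "c = C(m := 0)" if "HO_coeffs k m c" for c
  proof -
    have "c m = 0" "HO_vector k m (c(m := 1))"
      using that assms(1) by (simp_all add: HO_coeffs_iff_HO_vector)
    then have "c m = 0" "c(m := 1) = C"
      using HO_vector_unique assms by blast+
    then show ?thesis
      by (auto simp: fun_eq_iff split: if_splits)
  qed
  ultimately have "(THE c. HO_coeffs k m c) = C(m := 0)"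
    by (rule the_equality)
  moreover have "expoly (C(m := 0)) m z = (\<Sum>j\<in>{- \<bar>m\<bar>..\<bar>m\<bar>}. C j * exp (of_int j * z))" for z
    using expoly_eq_sum[of m "C(m := 0)" z, unfolded C_m] assms(2) by (auto simp: HO_vector_def)
  ultimately show ?thesis
    by (simp add: E_def)
qed

section \<open>The Cherednik operator on coefficient vectors\<close>

definition parity_interval :: "int \<Rightarrow> int set" where
  "parity_interval j = {p. - j < p \<and> p \<le> j \<and> even (j - p)}"

lemma parity_interval_eq_image: "parity_interval j = (\<lambda>i. 2 * int i - j + 2) ` {..<nat j}"
proof (intro equalityI subsetI)
  fix p
  assume "p \<in> parity_interval j"
  then have "- j < p" "p \<le> j" "even (j - p)"
    by (simp_all add: parity_interval_def)
  moreover define d where "d = (p + j - 2) div 2"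
  ultimately have "p = 2 * d - j + 2" "0 \<le> d" "d < j"
    by presburger+
  then show "p \<in> (\<lambda>i. 2 * int i - j + 2) ` {..<nat j}"
    by (intro image_eqI[of _ _ "nat d"]) auto
qed (auto simp: parity_interval_def)

lemma parity_interval_subset: "parity_interval j \<subseteq> {- \<bar>j\<bar>..\<bar>j\<bar>}"
  by (auto simp: parity_interval_def)

lemma sum_parity_interval_moment:
  assumes "0 \<le> k" and "0 \<le> j"
  shows "2 * of_real k * (\<Sum>p\<in>parity_interval j. moment k (p - l))
    = (of_real k - of_int (j - l) / 2) * moment k (j - l) - (of_real k + of_int (j + l) / 2) * moment k (j + l)"
proof -
  define \<Psi> where "\<Psi> i = (of_real k - of_int (2 * int i - j - l) / 2) * moment k (2 * int i - j - l)" for i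
  have "2 * of_real k * moment k (2 * int i - j + 2 - l) = \<Psi> (Suc i) - \<Psi> i" for i
    using moment_recurrence_difference[OF assms(1), of "2 * int i - j - l"]
    by (simp add: \<Psi>_def algebra_simps)
  moreover have "inj_on (\<lambda>i. 2 * int i - j + 2) {..<nat j}"
    by (auto simp: inj_on_def)
  ultimately have "2 * of_real k * (\<Sum>p\<in>parity_interval j. moment k (p - l)) = \<Psi> (nat j) - \<Psi> 0"
    by (simp add: parity_interval_eq_image sum.reindex sum_distrib_left sum_lessThan_telescope)
  then show ?thesis
    using assms(2) moment_uminus[of k "j + l"] by (simp add: \<Psi>_def field_simps)
qed

text \<open>\<open>cherednik k j p\<close> is the coefficient of \<open>e^{px}\<close> in \<open>T^k e^{jx}\<close>: for \<open>j > 0\<close> the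
  difference quotient \<open>(e^{jx} - e^{-jx}) / (1 - e^{-2x})\<close> is the sum of \<open>e^{px}\<close> over
  \<open>parity_interval j\<close>, and for \<open>j < 0\<close> it is minus the sum over \<open>parity_interval (- j)\<close>.\<close>

definition cherednik :: "real \<Rightarrow> int \<Rightarrow> int \<Rightarrow> complex" where
  "cherednik k j p = (if p = j then of_int j - of_real k else 0) +
     2 * of_real k * (of_bool (p \<in> parity_interval j) - of_bool (p \<in> parity_interval (- j)))"

definition cherednik_form :: "real \<Rightarrow> int \<Rightarrow> int \<Rightarrow> complex" where
  "cherednik_form k j l = of_int (j + l) / 2 * moment k (j - l) - (of_real k + of_int (j + l) / 2) * moment k (j + l)"

lemma cherednik_form_commute: "cherednik_form k j l = cherednik_form k l j"
  by (simp add: cherednik_form_def add.commute moment_commute[of k j l])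

lemma sum_cherednik_times:
  fixes f :: "int \<Rightarrow> complex"
  assumes "\<bar>j\<bar> \<le> N"
  shows "(\<Sum>p\<in>{- N..N}. cherednik k j p * f p) = (of_int j - of_real k) * f j
    + 2 * of_real k * sum f (parity_interval j) - 2 * of_real k * sum f (parity_interval (- j))"
proof -
  have sum_indicator: "(\<Sum>p\<in>{- N..N}. of_bool (p \<in> S) * f p) = sum f S" if "S \<subseteq> {- N..N}" for S
    using that by (intro sum.mono_neutral_cong_right) auto
  have subset: "parity_interval j \<subseteq> {- N..N}" "parity_interval (- j) \<subseteq> {- N..N}"
    using parity_interval_subset[of j] parity_interval_subset[of "- j"] assms by auto
  have pointwise: "cherednik k j p * f p = (if p = j then (of_int j - of_real k) * f j else 0)
      + 2 * of_real k * (of_bool (p \<in> parity_interval j) * f p)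
      - 2 * of_real k * (of_bool (p \<in> parity_interval (- j)) * f p)" for p
    by (simp add: cherednik_def algebra_simps)
  show ?thesis
    unfolding pointwise sum.distrib sum_subtractf sum_distrib_left[symmetric]
      sum_indicator[OF subset(1)] sum_indicator[OF subset(2)]
    using assms by (simp add: abs_le_iff)
qed

lemma sum_cherednik_moment:
  assumes "0 \<le> k" and "\<bar>j\<bar> \<le> N"
  shows "(\<Sum>p\<in>{- N..N}. cherednik k j p * moment k (p - l)) = cherednik_form k j l"
proof -
  have empty: "parity_interval i = {}" if "i \<le> 0" for i
    using that by (auto simp: parity_interval_def)
  show ?thesis
  proof (cases "0 \<le> j")
    case True
    then show ?thesis
      unfolding sum_cherednik_times[OF assms(2)] sum_parity_interval_moment[OF assms(1) True]
      by (simp add: empty cherednik_form_def field_simps)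
  next
    case False
    then have "0 \<le> - j"
      by simp
    moreover have "moment k (- j - l) = moment k (j + l)" "moment k (- j + l) = moment k (j - l)"
      using moment_uminus[of k "j + l"] moment_uminus[of k "j - l"] by simp_all
    ultimately show ?thesis
      using False unfolding sum_cherednik_times[OF assms(2)] sum_parity_interval_moment[OF assms(1) \<open>0 \<le> - j\<close>]
      by (simp add: empty cherednik_form_def field_simps)
  qed
qed

lemma cherednik_uminus:
  "cherednik k (- j) p = - cherednik k j (- p) - (if p = j then 2 * of_real k else 0)"
  by (cases "0 < j"; cases "j < 0") (auto simp: cherednik_def parity_interval_def)

lemma cherednik_diag: "0 < n \<Longrightarrow> cherednik k n n = of_int n + of_real k"
  by (simp add: cherednik_def parity_interval_def)

lemma cherednik_below:
  "0 < n \<Longrightarrow> j \<in> below n \<Longrightarrow> cherednik k j p \<noteq> 0 \<Longrightarrow> p \<in> below n"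
  by (auto simp: cherednik_def parity_interval_def below_def tri_def of_bool_def split: if_splits)

lemma cherednik_top:
  "0 < n \<Longrightarrow> cherednik k n p \<noteq> 0 \<Longrightarrow> p = n \<or> p \<in> below n"
  by (auto simp: cherednik_def parity_interval_def below_def tri_def of_bool_def split: if_splits)

definition cherednik_apply :: "real \<Rightarrow> int \<Rightarrow> (int \<Rightarrow> complex) \<Rightarrow> int \<Rightarrow> complex" where
  "cherednik_apply k N u p = (\<Sum>j\<in>{- N..N}. u j * cherednik k j p)"

definition pairing :: "real \<Rightarrow> int \<Rightarrow> (int \<Rightarrow> complex) \<Rightarrow> (int \<Rightarrow> complex) \<Rightarrow> complex" where
  "pairing k N u v = (\<Sum>l\<in>{- N..N}. v l * gram k N u l)"

lemma pairing_eq_double_sum: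
  "pairing k N u v = (\<Sum>l\<in>{- N..N}. \<Sum>j\<in>{- N..N}. v l * u j * moment k (j - l))"
  by (simp add: pairing_def gram_def sum_distrib_left mult.assoc)

lemma pairing_commute: "pairing k N u v = pairing k N v u"
  unfolding pairing_eq_double_sum
  by (subst sum.swap) (simp add: moment_commute[of k] mult.commute)

lemma pairing_cherednik_apply:
  assumes "0 \<le> k"
  shows "pairing k N u (cherednik_apply k N v)
    = (\<Sum>l\<in>{- N..N}. \<Sum>j\<in>{- N..N}. v l * u j * cherednik_form k l j)"
proof -
  have "pairing k N u (cherednik_apply k N v)
      = (\<Sum>p\<in>{- N..N}. \<Sum>l\<in>{- N..N}. \<Sum>j\<in>{- N..N}. v l * u j * (cherednik k l p * moment k (j - p)))"
    by (simp add: pairing_def gram_def cherednik_apply_def sum_product mult_ac)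
  also have "\<dots> = (\<Sum>l\<in>{- N..N}. \<Sum>p\<in>{- N..N}. \<Sum>j\<in>{- N..N}. v l * u j * (cherednik k l p * moment k (j - p)))"
    by (rule sum.swap)
  also have "\<dots> = (\<Sum>l\<in>{- N..N}. \<Sum>j\<in>{- N..N}. \<Sum>p\<in>{- N..N}. v l * u j * (cherednik k l p * moment k (j - p)))"
    by (rule sum.cong[OF refl sum.swap])
  also have "\<dots> = (\<Sum>l\<in>{- N..N}. \<Sum>j\<in>{- N..N}. v l * u j * cherednik_form k l j)"
  proof (intro sum.cong refl)
    fix l j
    assume "l \<in> {- N..N}"
    then have "(\<Sum>p\<in>{- N..N}. cherednik k l p * moment k (j - p)) = cherednik_form k l j"
      using sum_cherednik_moment[OF assms, of l N j] by (simp add: moment_commute[of k j] abs_le_iff)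
    then show "(\<Sum>p\<in>{- N..N}. v l * u j * (cherednik k l p * moment k (j - p))) = v l * u j * cherednik_form k l j"
      by (simp add: sum_distrib_left[symmetric])
  qed
  finally show ?thesis .
qed

text \<open>The symmetry of \<open>cherednik_form\<close> is the self-adjointness of \<open>T^k\<close> for \<open>(\<cdot>, \<cdot>)_k\<close>.\<close>

lemma pairing_cherednik_apply_commute:
  assumes "0 \<le> k"
  shows "pairing k N (cherednik_apply k N u) v = pairing k N u (cherednik_apply k N v)"
  unfolding pairing_commute[of k N "cherednik_apply k N u"] pairing_cherednik_apply[OF assms]
  by (subst sum.swap) (simp add: cherednik_form_commute mult.commute)

lemma gram_reflect: "gram k N (\<lambda>j. u (- j)) l = gram k N u (- l)"
  unfolding gram_def
  by (rule sum.reindex_bij_witness[of _ uminus uminus]) (auto simp: moment_commute[of k _ l])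

lemma cherednik_apply_reflect:
  assumes "p \<in> {- N..N}"
  shows "cherednik_apply k N (\<lambda>j. u (- j)) p = - cherednik_apply k N u (- p) - 2 * of_real k * u p"
proof -
  have "cherednik_apply k N (\<lambda>j. u (- j)) p = (\<Sum>j\<in>{- N..N}. u j * cherednik k (- j) p)"
    unfolding cherednik_apply_def by (rule sum.reindex_bij_witness[of _ uminus uminus]) auto
  also have "\<dots> = (\<Sum>j\<in>{- N..N}. - (u j * cherednik k j (- p)) - (if j = p then 2 * of_real k * u p else 0))"
    by (intro sum.cong refl) (simp add: cherednik_uminus algebra_simps)
  also have "\<dots> = - cherednik_apply k N u (- p) - 2 * of_real k * u p"
    using assms by (simp add: sum_subtractf sum_negf cherednik_apply_def)
  finally show ?thesis .
qed

lemma pairing_eq_0_if_orthogonal: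
  assumes "\<And>l. v l \<noteq> 0 \<Longrightarrow> gram k N u l = 0"
  shows "pairing k N u v = 0"
  unfolding pairing_def using assms by (intro sum.neutral) (metis mult_eq_0_iff)

lemma pairing_cong:
  assumes "\<And>p. p \<in> {- N..N} \<Longrightarrow> u p = u' p" and "\<And>p. p \<in> {- N..N} \<Longrightarrow> v p = v' p"
  shows "pairing k N u v = pairing k N u' v'"
  unfolding pairing_eq_double_sum using assms by (intro sum.cong refl) simp

lemma pairing_linear_left: "pairing k N (\<lambda>p. a * u p + u' p) v = a * pairing k N u v + pairing k N u' v"
  by (simp add: pairing_eq_double_sum sum.distrib sum_distrib_left algebra_simps)

lemma pairing_linear_right: "pairing k N u (\<lambda>p. a * v p + v' p) = a * pairing k N u v + pairing k N u v'"
  by (simp add: pairing_eq_double_sum sum.distrib sum_distrib_left algebra_simps)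

lemma pairing_eq_0_if_eigen:
  assumes "0 \<le> k" and "\<alpha> \<noteq> \<beta>"
    and "\<And>p. p \<in> {- N..N} \<Longrightarrow> cherednik_apply k N u p = \<alpha> * u p + w p" and "pairing k N v w = 0"
    and "\<And>p. p \<in> {- N..N} \<Longrightarrow> cherednik_apply k N v p = \<beta> * v p + y p" and "pairing k N y u = 0"
  shows "pairing k N v u = 0"
proof -
  have "\<alpha> * pairing k N v u = pairing k N v (cherednik_apply k N u)"
    using assms(3,4) pairing_cong[of N v v "cherednik_apply k N u" "\<lambda>p. \<alpha> * u p + w p" k]
    by (simp add: pairing_linear_right)
  also have "\<dots> = pairing k N (cherednik_apply k N v) u"
    using assms(1) by (rule pairing_cherednik_apply_commute[symmetric])
  also have "\<dots> = \<beta> * pairing k N v u"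
    using assms(5,6) pairing_cong[of N "cherednik_apply k N v" "\<lambda>p. \<beta> * v p + y p" u u k]
    by (simp add: pairing_linear_left)
  finally show ?thesis
    using assms(2) by simp
qed

lemma cherednik_apply_HO_vector:
  assumes "0 < n" and "HO_vector k n C" and "p \<notin> below n"
  shows "cherednik_apply k n C p = (of_int n + of_real k) * C p"
proof -
  have "C j * cherednik k j p = (if j = n then cherednik k n p else 0)" for j
    using assms cherednik_below[of n j k p] by (auto simp: HO_vector_def)
  then have "cherednik_apply k n C p = cherednik k n p"
    using assms(1) by (simp add: cherednik_apply_def)
  moreover have "cherednik k n p = 0" if "p \<noteq> n"
    using cherednik_top[OF assms(1)] assms(3) that by blast
  ultimately show ?thesis
    using assms by (cases "p = n") (auto simp: HO_vector_def cherednik_diag)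
qed

section \<open>Reflection\<close>

lemma cherednik_apply_reflect_combination:
  assumes "p \<in> {- N..N}" and "a * \<alpha> = of_real k"
  shows "cherednik_apply k N (\<lambda>j. u (- j) + a * u j) p = - \<alpha> * (u (- p) + a * u p)
    + (a * (cherednik_apply k N u p - \<alpha> * u p) - (cherednik_apply k N u (- p) - \<alpha> * u (- p)))"
proof -
  have "cherednik_apply k N (\<lambda>j. u (- j) + a * u j) p
      = cherednik_apply k N (\<lambda>j. u (- j)) p + a * cherednik_apply k N u p"
    by (simp add: cherednik_apply_def sum.distrib sum_distrib_left algebra_simps)
  also have "\<dots> = - cherednik_apply k N u (- p) - 2 * of_real k * u p + a * cherednik_apply k N u p"
    using assms(1) by (simp add: cherednik_apply_reflect)
  finally show ?thesis
    using assms(2)[symmetric] by (simp add: algebra_simps)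
qed

lemma gram_reflect_combination:
  assumes "0 < n" and "HO_vector k n C" and "l \<in> below n"
  shows "gram k n (\<lambda>j. C (- j) + a * C j) l = 0"
proof -
  have "gram k n (\<lambda>j. C (- j) + a * C j) l = gram k n (\<lambda>j. C (- j)) l + a * gram k n C l"
    by (simp add: gram_def sum.distrib sum_distrib_left algebra_simps)
  also have "\<dots> = gram k n C (- l) + a * gram k n C l"
    by (simp add: gram_reflect)
  finally show ?thesis
    using assms uminus_in_below[OF assms(1,3)] by (simp add: HO_vector_def)
qed

lemma pairing_HO_vector_right:
  assumes "0 < n" and "HO_vector k n C" and "\<And>l. l \<in> below n \<Longrightarrow> gram k n u l = 0"
  shows "pairing k n u C = gram k n u n"
proof -
  have "C l * gram k n u l = (if l = n then gram k n u n else 0)" for l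
    using assms by (auto simp: HO_vector_def)
  with assms(1) show ?thesis
    by (simp add: pairing_def)
qed

lemma reflect_combination_vanishes_off_below:
  fixes w :: "int \<Rightarrow> 'a::ring"
  assumes "0 < n" and "\<And>p. p \<notin> below n \<Longrightarrow> w p = 0" and "l \<notin> below n"
  shows "a * w l - w (- l) = 0"
proof -
  have "- l \<notin> below n"
    using uminus_in_below[OF assms(1), of "- l"] assms(3) by auto
  then show ?thesis
    using assms(2,3) by simp
qed

text \<open>For \<open>F = C \<circ> uminus + a C\<close> the coefficient \<open>a = k / (n + k)\<close> is exactly the one for which
  \<open>F\<close> is an eigenvector of \<open>T^k\<close> modulo \<open>below n\<close>, with eigenvalue \<open>- (n + k)\<close> opposite to
  that of \<open>C\<close>.\<close>

lemma gram_reflect_combination_top: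
  assumes "0 \<le> k" and "0 < n" and C: "HO_vector k n C"
  shows "gram k n (\<lambda>j. C (- j) + of_real (k / (of_int n + k)) * C j) n = 0"
proof -
  define a where "a = complex_of_real (k / (of_int n + k))"
  define \<alpha> where "\<alpha> = complex_of_int n + of_real k"
  define F where "F j = C (- j) + a * C j" for j
  define w where "w p = cherednik_apply k n C p - \<alpha> * C p" for p
  have "of_int n + k \<noteq> 0" and \<alpha>_real: "\<alpha> = complex_of_real (of_int n + k)"
    using assms by (simp_all add: \<alpha>_def)
  then have "a * \<alpha> = of_real k" and "\<alpha> \<noteq> 0"
    unfolding a_def \<alpha>_real of_real_mult[symmetric] of_real_eq_0_iff by simp_all
  then have "\<alpha> \<noteq> - \<alpha>"
    by (simp add: eq_neg_iff_add_eq_0)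
  have w_below: "w p = 0" if "p \<notin> below n" for p
    using cherednik_apply_HO_vector[OF assms(2,3) that] by (simp add: w_def \<alpha>_def)
  have F_below: "gram k n F l = 0" if "l \<in> below n" for l
    unfolding F_def using assms(2,3) that by (rule gram_reflect_combination)
  have "pairing k n F C = 0"
  proof (rule pairing_eq_0_if_eigen[OF assms(1) \<open>\<alpha> \<noteq> - \<alpha>\<close>])
    show "cherednik_apply k n C p = \<alpha> * C p + w p" for p
      by (simp add: w_def)
    show "cherednik_apply k n F p = - \<alpha> * F p + (a * w p - w (- p))" if "p \<in> {- n..n}" for p
      unfolding F_def[abs_def] w_def using that \<open>a * \<alpha> = of_real k\<close>
      by (rule cherednik_apply_reflect_combination)
    show "pairing k n F w = 0"
      using F_below w_below by (intro pairing_eq_0_if_orthogonal) blast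
    show "pairing k n (\<lambda>p. a * w p - w (- p)) C = 0"
      unfolding pairing_commute[of k n _ C] using C assms(2) w_below reflect_combination_vanishes_off_below[of n w _ a]
      by (intro pairing_eq_0_if_orthogonal) (auto simp: HO_vector_def)
  qed
  moreover have "pairing k n F C = gram k n F n"
    using assms(2,3) F_below by (rule pairing_HO_vector_right)
  ultimately have "gram k n F n = 0"
    by simp
  then show ?thesis
    by (simp only: F_def[abs_def] a_def)
qed

lemma HO_vector_reflect:
  assumes "0 \<le> k" and "0 < n" and C: "HO_vector k n C"
  shows "HO_vector k (- n) (\<lambda>j. C (- j) + of_real (k / (of_int n + k)) * C j)"
proof -
  have "C (- n) = 0"
    using C assms(2) uminus_not_in_below[OF assms(2)] by (auto simp: HO_vector_def)
  moreover have "C (- j) = 0" "C j = 0" if "j \<notin> insert (- n) (below (- n))" for j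
  proof -
    have "C i = 0" if "i \<noteq> n" "i \<notin> below n" for i
      using C that by (simp add: HO_vector_def)
    moreover have "- j \<notin> below n"
      using uminus_in_below[OF assms(2), of "- j"] that by (auto simp: below_uminus[OF assms(2)])
    ultimately show "C (- j) = 0" "C j = 0"
      using that by (auto simp: below_uminus[OF assms(2)])
  qed
  moreover have "gram k n (\<lambda>j. C (- j) + of_real (k / (of_int n + k)) * C j) l = 0" if "l \<in> below (- n)" for l
    using that gram_reflect_combination_top[OF assms]
      gram_reflect_combination[OF assms(2) C, where a = "of_real (k / (of_int n + k))"]
    by (auto simp: below_uminus[OF assms(2)])
  ultimately show ?thesis
    using C assms(2) by (simp add: HO_vector_def)
qed

theorem mainTheorem3:
  fixes k :: real and n :: int and x :: real
  assumes "k \<ge> 0" and "n \<ge> 1"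
  shows "E k (-n) x = E k n (-x) + complex_of_real (k / (of_int n + k)) * E k n x"
proof -
  define a where "a = complex_of_real (k / (of_int n + k))"
  have n: "0 < n"
    using assms(2) by simp
  obtain C where C: "HO_vector k n C"
    using HO_vector_exists[OF assms(1)] by blast
  have E_n: "E k n y = (\<Sum>j\<in>{- n..n}. C j * exp (of_int j * of_real y))" for y
    using E_eq_HO_vector_sum[OF assms(1) C] n by simp
  have "E k (- n) x = (\<Sum>j\<in>{- n..n}. (C (- j) + a * C j) * exp (of_int j * of_real x))"
    using E_eq_HO_vector_sum[OF assms(1) HO_vector_reflect[OF assms(1) n C]] n by (simp add: a_def)
  also have "\<dots> = (\<Sum>j\<in>{- n..n}. C (- j) * exp (of_int j * of_real x)) + a * E k n x"
    by (simp add: E_n sum.distrib sum_distrib_left algebra_simps)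
  also have "(\<Sum>j\<in>{- n..n}. C (- j) * exp (of_int j * of_real x)) = E k n (- x)"
    unfolding E_n by (rule sum.reindex_bij_witness[of _ uminus uminus]) auto
  finally show ?thesis
    by (simp add: a_def)
qed

end
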